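(* Let $q,w\in L^1[-1,1]$ be real-valued with $w(x)\ne0$ for a.e. $x\in[-1,1]$. Let $\lambda\in\mathbb{C}\setminus\mathbb{R}$ be an eigenvalue of $-y''+qy=\lambda wy$, $y(-1)=y(1)=0$, with eigenfunction $\phi$ normalized by $\int_{-1}^1|\phi|^2\,dx=1$. Then $$\int_{-1}^1 w|\phi|^2\,dx=0,\qquad \int_{-1}^1\big(|\phi'|^2+q|\phi|^2\big)\,dx=0,$$ $$\int_{-1}^1|\phi'|^2\,dx\le 4\|q_-\|_1^2,\qquad \int_{-1}^1 q_-|\phi|^2\,dx\le 4\|q_-\|_1^2,$$ and $|\phi(x)|^2\le \int_{-1}^1|\phi'|^2\,dx$ for all $x\in[-1,1]$.
   Context: $\|\cdot\|_1$ denotes the norm of $L^1[-1,1]$ and $q_-(x)=-\min\{0,q(x)\}$. A number $\lambda\in\mathbb{C}$ is an eigenvalue of $-y''+qy=\lambda wy$, $y(-1)=y(1)=0$, if there is a nontrivial function $y$ (an eigenfunction) with $y,y'$ absolutely continuous on $[-1,1]$ satisfying $-y''+qy=\lambda wy$ a.e. on $[-1,1]$ and $y(-1)=y(1)=0$. *)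

theory Defs
  imports "HOL-Analysis.Analysis"
begin

definition abs_cont_on :: "real \<Rightarrow> real \<Rightarrow> (real \<Rightarrow> 'b::real_normed_vector) \<Rightarrow> bool" where
  "abs_cont_on a b f \<longleftrightarrow>
     (\<forall>\<epsilon>>0. \<exists>\<delta>>0. \<forall>(n::nat) (s::nat \<Rightarrow> real) (t::nat \<Rightarrow> real).
        (\<forall>k<n. a \<le> s k \<and> s k \<le> t k \<and> t k \<le> b) \<and>
        (\<forall>i<n. \<forall>j<n. i \<noteq> j \<longrightarrow> t i \<le> s j \<or> t j \<le> s i) \<and>
        (\<Sum>k<n. t k - s k) < \<delta>
        \<longrightarrow> (\<Sum>k<n. norm (f (t k) - f (s k))) < \<epsilon>)"

definition neg_part :: "(real \<Rightarrow> real) \<Rightarrow> real \<Rightarrow> real" where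
  "neg_part q x = - min 0 (q x)"

end

theory Submission
  imports Defs
begin

text \<open>
  The product \<open>\<phi>' cnj \<phi>\<close> is absolutely continuous with derivative
  \<open>|\<phi>'|\<^sup>2 + (q - \<lambda> w) |\<phi>|\<^sup>2\<close> almost everywhere, so the fundamental theorem of calculus for
  absolutely continuous functions and the boundary conditions give
  \<open>\<integral>(|\<phi>'|\<^sup>2 + q |\<phi>|\<^sup>2) = \<lambda> \<integral>w |\<phi>|\<^sup>2\<close>; as \<open>\<lambda>\<close> is not real, both integrals vanish.
  Hence \<open>D = \<integral>|\<phi>'|\<^sup>2 = -\<integral>q |\<phi>|\<^sup>2\<close> is at most \<open>P = \<integral>q\<^sub>- |\<phi>|\<^sup>2\<close>, while Agmon's
  inequality \<open>|\<phi> x|\<^sup>2 \<le> sqrt (\<integral>|\<phi>|\<^sup>2 \<integral>|\<phi>'|\<^sup>2) = sqrt D\<close> gives \<open>P \<le> \<parallel>q\<^sub>-\<parallel>\<^sub>1 sqrt D\<close>.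
  Together, \<open>D\<close> and \<open>P\<close> are at most \<open>\<parallel>q\<^sub>-\<parallel>\<^sub>1\<^sup>2\<close>. The pointwise bound comes from
  \<open>2 |\<phi> x| \<le> \<integral>|\<phi>'|\<close> and the Cauchy-Schwarz inequality.
\<close>

lemma abs_cont_onD_finite:
  fixes F :: "real \<Rightarrow> 'a::real_normed_vector"
  assumes "abs_cont_on a b F" "e > 0"
  obtains d where "d > 0"
    "\<And>I s t. finite I \<Longrightarrow> (\<forall>i\<in>I. a \<le> s i \<and> s i \<le> t i \<and> t i \<le> b) \<Longrightarrow>
      (\<forall>i\<in>I. \<forall>j\<in>I. i \<noteq> j \<longrightarrow> t i \<le> s j \<or> t j \<le> s i) \<Longrightarrow>
      (\<Sum>i\<in>I. t i - s i) < d \<Longrightarrow> (\<Sum>i\<in>I. norm (F (t i) - F (s i))) < e"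
proof -
  obtain d where "d > 0" and d: "\<forall>(n::nat) s t. (\<forall>k<n. a \<le> s k \<and> s k \<le> t k \<and> t k \<le> b) \<and>
      (\<forall>i<n. \<forall>j<n. i \<noteq> j \<longrightarrow> t i \<le> s j \<or> t j \<le> s i) \<and>
      (\<Sum>k<n. t k - s k) < d \<longrightarrow> (\<Sum>k<n. norm (F (t k) - F (s k))) < e"
    using assms(1)[unfolded abs_cont_on_def, rule_format, OF assms(2)] by blast
  show thesis
  proof (rule that[OF \<open>d > 0\<close>])
    fix I :: "'i set" and s t
    assume "finite I" and bounds: "\<forall>i\<in>I. a \<le> s i \<and> s i \<le> t i \<and> t i \<le> b"
      and disj: "\<forall>i\<in>I. \<forall>j\<in>I. i \<noteq> j \<longrightarrow> t i \<le> s j \<or> t j \<le> s i"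
      and small: "(\<Sum>i\<in>I. t i - s i) < d"
    obtain h where h: "bij_betw h {..<card I} I"
      using ex_bij_betw_nat_finite[OF \<open>finite I\<close>] by (auto simp: lessThan_atLeast0)
    have reindex: "(\<Sum>k<card I. G (h k)) = (\<Sum>i\<in>I. G i)" for G :: "'i \<Rightarrow> real"
      using sum.reindex_bij_betw[OF h] .
    have hI: "h k \<in> I" if "k < card I" for k
      using bij_betw_apply[OF h] that by simp
    have hinj: "h i \<noteq> h j" if "i < card I" "j < card I" "i \<noteq> j" for i j
      using bij_betw_imp_inj_on[OF h] that by (auto simp: inj_on_def)
    have "(\<Sum>k<card I. norm (F (t (h k)) - F (s (h k)))) < e"
    proof (rule d[rule_format], intro conjI allI impI)
      fix k assume "k < card I"
      then show "a \<le> s (h k)" "s (h k) \<le> t (h k)" "t (h k) \<le> b"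
        using bounds hI by auto
    next
      fix i j assume "i < card I" "j < card I" "i \<noteq> j"
      then show "t (h i) \<le> s (h j) \<or> t (h j) \<le> s (h i)"
        using disj hI hinj by blast
    next
      show "(\<Sum>k<card I. t (h k) - s (h k)) < d"
        using small reindex[of "\<lambda>i. t i - s i"] by simp
    qed
    then show "(\<Sum>i\<in>I. norm (F (t i) - F (s i))) < e"
      using reindex[of "\<lambda>i. norm (F (t i) - F (s i))"] by simp
  qed
qed

lemma abs_cont_on_imp_continuous_on:
  fixes F :: "real \<Rightarrow> 'a::real_normed_vector"
  assumes "abs_cont_on a b F"
  shows "continuous_on {a..b} F"
  unfolding continuous_on_iff
proof (intro ballI allI impI)
  fix x e :: real assume x: "x \<in> {a..b}" and "e > 0"
  obtain d where "d > 0" and d: "\<forall>(n::nat) s t. (\<forall>k<n. a \<le> s k \<and> s k \<le> t k \<and> t k \<le> b) \<and>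
      (\<forall>i<n. \<forall>j<n. i \<noteq> j \<longrightarrow> t i \<le> s j \<or> t j \<le> s i) \<and>
      (\<Sum>k<n. t k - s k) < d \<longrightarrow> (\<Sum>k<n. norm (F (t k) - F (s k))) < e"
    using assms[unfolded abs_cont_on_def, rule_format, OF \<open>e > 0\<close>] by blast
  have "dist (F y) (F x) < e" if y: "y \<in> {a..b}" "dist y x < d" for y
  proof -
    have "norm (F (max x y) - F (min x y)) < e"
      using d[rule_format, of 1 "\<lambda>_. min x y" "\<lambda>_. max x y"] x y
      by (simp add: dist_real_def abs_if max_def min_def split: if_splits)
    then show ?thesis
      by (cases "x \<le> y") (simp_all add: dist_norm norm_minus_commute max_def min_def)
  qed
  with \<open>d > 0\<close> show "\<exists>d>0. \<forall>y\<in>{a..b}. dist y x < d \<longrightarrow> dist (F y) (F x) < e"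
    by blast
qed

lemma abs_cont_on_cnj:
  assumes "abs_cont_on a b F"
  shows "abs_cont_on a b (\<lambda>x. cnj (F x))"
  using assms unfolding abs_cont_on_def
  by (simp only: complex_cnj_diff[symmetric] complex_mod_cnj)

lemma norm_mult_diff_le:
  fixes x y u v :: "'a::real_normed_algebra"
  shows "norm (x * y - u * v) \<le> norm x * norm (y - v) + norm (x - u) * norm v"
proof -
  have "x * y - u * v = x * (y - v) + (x - u) * v"
    by (simp add: algebra_simps)
  then show ?thesis
    by (metis norm_triangle_le norm_mult_ineq add_mono)
qed

lemma abs_cont_on_mult:
  fixes F G :: "real \<Rightarrow> 'a::real_normed_algebra"
  assumes F: "abs_cont_on a b F" and G: "abs_cont_on a b G"
  shows "abs_cont_on a b (\<lambda>x. F x * G x)"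
proof -
  have "bounded ((F ` {a..b}) \<union> (G ` {a..b}))"
    using F G by (intro bounded_Un[THEN iffD2] conjI compact_imp_bounded compact_continuous_image
        abs_cont_on_imp_continuous_on compact_Icc)
  then obtain M where "M > 0" and M: "\<And>x. x \<in> {a..b} \<Longrightarrow> norm (F x) \<le> M \<and> norm (G x) \<le> M"
    unfolding bounded_pos by blast
  have product: "norm (F t * G t - F s * G s) \<le> M * norm (G t - G s) + M * norm (F t - F s)"
    if "s \<in> {a..b}" "t \<in> {a..b}" for s t
  proof -
    have "norm (F t * G t - F s * G s)
        \<le> norm (F t) * norm (G t - G s) + norm (F t - F s) * norm (G s)"
      by (rule norm_mult_diff_le)
    also have "\<dots> \<le> M * norm (G t - G s) + norm (F t - F s) * M"
      using M that \<open>M > 0\<close> by (intro add_mono mult_mono) auto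
    finally show ?thesis by (simp add: mult.commute)
  qed
  show ?thesis
    unfolding abs_cont_on_def
  proof (intro allI impI)
    fix e :: real assume "e > 0"
    then have "e / (2 * M) > 0" using \<open>M > 0\<close> by simp
    from F[unfolded abs_cont_on_def, rule_format, OF this]
    obtain d1 where "d1 > 0" and d1: "\<forall>(n::nat) s t. (\<forall>k<n. a \<le> s k \<and> s k \<le> t k \<and> t k \<le> b) \<and>
        (\<forall>i<n. \<forall>j<n. i \<noteq> j \<longrightarrow> t i \<le> s j \<or> t j \<le> s i) \<and>
        (\<Sum>k<n. t k - s k) < d1 \<longrightarrow> (\<Sum>k<n. norm (F (t k) - F (s k))) < e / (2 * M)"
      by blast
    from G[unfolded abs_cont_on_def, rule_format, OF \<open>e / (2 * M) > 0\<close>]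
    obtain d2 where "d2 > 0" and d2: "\<forall>(n::nat) s t. (\<forall>k<n. a \<le> s k \<and> s k \<le> t k \<and> t k \<le> b) \<and>
        (\<forall>i<n. \<forall>j<n. i \<noteq> j \<longrightarrow> t i \<le> s j \<or> t j \<le> s i) \<and>
        (\<Sum>k<n. t k - s k) < d2 \<longrightarrow> (\<Sum>k<n. norm (G (t k) - G (s k))) < e / (2 * M)"
      by blast
    show "\<exists>\<delta>>0. \<forall>(n::nat) s t. (\<forall>k<n. a \<le> s k \<and> s k \<le> t k \<and> t k \<le> b) \<and>
        (\<forall>i<n. \<forall>j<n. i \<noteq> j \<longrightarrow> t i \<le> s j \<or> t j \<le> s i) \<and>
        (\<Sum>k<n. t k - s k) < \<delta> \<longrightarrow> (\<Sum>k<n. norm (F (t k) * G (t k) - F (s k) * G (s k))) < e"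
    proof (intro exI conjI allI impI)
      show "min d1 d2 > 0" using \<open>d1 > 0\<close> \<open>d2 > 0\<close> by simp
      fix n :: nat and s t :: "nat \<Rightarrow> real"
      assume family: "(\<forall>k<n. a \<le> s k \<and> s k \<le> t k \<and> t k \<le> b) \<and>
        (\<forall>i<n. \<forall>j<n. i \<noteq> j \<longrightarrow> t i \<le> s j \<or> t j \<le> s i) \<and> (\<Sum>k<n. t k - s k) < min d1 d2"
      have "(\<Sum>k<n. norm (F (t k) * G (t k) - F (s k) * G (s k)))
          \<le> M * (\<Sum>k<n. norm (G (t k) - G (s k))) + M * (\<Sum>k<n. norm (F (t k) - F (s k)))"
        unfolding sum_distrib_left sum.distrib[symmetric]
        using family by (intro sum_mono product) auto
      also have "\<dots> < M * (e / (2 * M)) + M * (e / (2 * M))"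
        using d1 d2 family \<open>M > 0\<close> by (intro add_strict_mono mult_strict_left_mono) auto
      also have "\<dots> = e" using \<open>M > 0\<close> by (simp add: field_simps)
      finally show "(\<Sum>k<n. norm (F (t k) * G (t k) - F (s k) * G (s k))) < e" .
    qed
  qed
qed

lemma tagged_division_of_real_bounds:
  assumes p: "p tagged_division_of {a..b::real}" and xK: "(x, K) \<in> p"
  shows "a \<le> Inf K \<and> Inf K \<le> Sup K \<and> Sup K \<le> b \<and> measure lborel K = Sup K - Inf K"
proof -
  obtain u v where "K = {u..v}" "K \<noteq> {}" "K \<subseteq> {a..b}"
    using tagged_division_ofD(2,3,4)[OF p xK] by (metis box_real(2) empty_iff)
  then show ?thesis by auto
qed

lemma tagged_division_of_real_nonoverlapping:
  assumes p: "p tagged_division_of {a..b::real}"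
    and xK: "(x, K) \<in> p" and yL: "(y, L) \<in> p" and "(x, K) \<noteq> (y, L)"
    and "measure lborel K \<noteq> 0" "measure lborel L \<noteq> 0"
  shows "Sup K \<le> Inf L \<or> Sup L \<le> Inf K"
proof -
  obtain u v u' v' where K: "K = {u..v}" and L: "L = {u'..v'}"
    using tagged_division_ofD(4)[OF p xK] tagged_division_ofD(4)[OF p yL] by (metis box_real(2))
  have "u < v" "u' < v'"
    using \<open>measure lborel K \<noteq> 0\<close> \<open>measure lborel L \<noteq> 0\<close> K L by (auto split: if_splits)
  have "{u<..<v} \<inter> {u'<..<v'} = {}"
    using tagged_division_ofD(5)[OF p xK yL \<open>(x, K) \<noteq> (y, L)\<close>] K L by simp
  then have "v \<le> u' \<or> v' \<le> u"
    using \<open>u < v\<close> \<open>u' < v'\<close> dense[of "max u u'" "min v v'"] by (auto simp: not_le)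
  then show ?thesis
    using \<open>u < v\<close> \<open>u' < v'\<close> K L by simp
qed

lemma abs_cont_on_tagged_division_variation:
  fixes F :: "real \<Rightarrow> 'a::real_normed_vector"
  assumes "abs_cont_on a b F" "e > 0"
  obtains d where "d > 0"
    "\<And>p I. p tagged_division_of {a..b} \<Longrightarrow> I \<subseteq> p \<Longrightarrow> (\<Sum>(x, K)\<in>I. measure lborel K) < d \<Longrightarrow>
      (\<Sum>(x, K)\<in>I. norm (F (Sup K) - F (Inf K))) < e"
proof (rule abs_cont_onD_finite[OF assms])
  fix d :: real
  assume "d > 0" and d: "\<And>(I :: (real \<times> real set) set) s t. finite I \<Longrightarrow>
      (\<forall>i\<in>I. a \<le> s i \<and> s i \<le> t i \<and> t i \<le> b) \<Longrightarrow>
      (\<forall>i\<in>I. \<forall>j\<in>I. i \<noteq> j \<longrightarrow> t i \<le> s j \<or> t j \<le> s i) \<Longrightarrow>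
      (\<Sum>i\<in>I. t i - s i) < d \<Longrightarrow> (\<Sum>i\<in>I. norm (F (t i) - F (s i))) < e"
  show thesis
  proof (rule that[OF \<open>d > 0\<close>])
    fix p I
    assume p: "p tagged_division_of {a..b}" and "I \<subseteq> p"
      and small: "(\<Sum>(x, K)\<in>I. measure lborel K) < d"
    have interval: "a \<le> Inf (snd i) \<and> Inf (snd i) \<le> Sup (snd i) \<and> Sup (snd i) \<le> b
        \<and> measure lborel (snd i) = Sup (snd i) - Inf (snd i)" if "i \<in> p" for i
      using tagged_division_of_real_bounds[OF p, of "fst i" "snd i"] that by simp
    have "finite I" using p \<open>I \<subseteq> p\<close> finite_subset by blast
    define J where "J = {i \<in> I. measure lborel (snd i) \<noteq> 0}"
    have "J \<subseteq> p" "finite J" using \<open>I \<subseteq> p\<close> \<open>finite I\<close> by (auto simp: J_def)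
    have "(\<Sum>(x, K)\<in>I. norm (F (Sup K) - F (Inf K)))
        = (\<Sum>i\<in>I. norm (F (Sup (snd i)) - F (Inf (snd i))))"
      by (simp add: split_def)
    also have "\<dots> = (\<Sum>i\<in>J. norm (F (Sup (snd i)) - F (Inf (snd i))))"
    proof (rule sum.mono_neutral_right[OF \<open>finite I\<close>])
      show "\<forall>i\<in>I - J. norm (F (Sup (snd i)) - F (Inf (snd i))) = 0"
        using interval \<open>I \<subseteq> p\<close> by (auto simp: J_def)
    qed (auto simp: J_def)
    also have "\<dots> < e"
    proof (rule d[OF \<open>finite J\<close>])
      show "\<forall>i\<in>J. a \<le> Inf (snd i) \<and> Inf (snd i) \<le> Sup (snd i) \<and> Sup (snd i) \<le> b"
        using interval \<open>J \<subseteq> p\<close> by blast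
      show "\<forall>i\<in>J. \<forall>j\<in>J. i \<noteq> j \<longrightarrow> Sup (snd i) \<le> Inf (snd j) \<or> Sup (snd j) \<le> Inf (snd i)"
      proof (intro ballI impI)
        fix i j assume "i \<in> J" "j \<in> J" "i \<noteq> j"
        then show "Sup (snd i) \<le> Inf (snd j) \<or> Sup (snd j) \<le> Inf (snd i)"
          using tagged_division_of_real_nonoverlapping[OF p, of "fst i" "snd i" "fst j" "snd j"]
            \<open>J \<subseteq> p\<close>
          by (auto simp: J_def)
      qed
      have "(\<Sum>i\<in>J. Sup (snd i) - Inf (snd i)) = (\<Sum>i\<in>J. measure lborel (snd i))"
        using interval \<open>J \<subseteq> p\<close> by (intro sum.cong) auto
      also have "\<dots> \<le> (\<Sum>(x, K)\<in>I. measure lborel K)"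
        unfolding split_def using \<open>finite I\<close> by (intro sum_mono2) (auto simp: J_def)
      finally show "(\<Sum>i\<in>J. Sup (snd i) - Inf (snd i)) < d"
        using small by linarith
    qed
    finally show "(\<Sum>(x, K)\<in>I. norm (F (Sup K) - F (Inf K))) < e" .
  qed
qed

lemma tagged_division_sum_measure_le:
  fixes T :: "'a::euclidean_space set"
  assumes p: "p tagged_division_of S" and "I \<subseteq> p"
    and sub: "\<And>x K. (x, K) \<in> I \<Longrightarrow> K \<subseteq> T" and "T \<in> lmeasurable"
  shows "(\<Sum>(x, K)\<in>I. measure lborel K) \<le> measure lebesgue T"
proof -
  have "finite I" using p \<open>I \<subseteq> p\<close> finite_subset by blast
  have box: "\<exists>u v. snd i = cbox u v" if "i \<in> I" for i
    using tagged_division_ofD(4)[OF p] \<open>I \<subseteq> p\<close> that by (metis prod.collapse subsetD)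
  have meas: "snd i \<in> lmeasurable" if "i \<in> I" for i
    using box[OF that] by auto
  have "(\<Sum>(x, K)\<in>I. measure lborel K) = (\<Sum>i\<in>I. measure lebesgue (snd i))"
    unfolding split_def
  proof (rule sum.cong)
    fix i assume "i \<in> I"
    then obtain u v where "snd i = cbox u v" using box by blast
    then show "measure lborel (snd i) = measure lebesgue (snd i)" by simp
  qed simp
  also have "\<dots> = measure lebesgue (\<Union>(snd ` I))"
  proof (rule measure_negligible_finite_Union_image[symmetric, OF \<open>finite I\<close> meas])
    show "pairwise (\<lambda>i j. negligible (snd i \<inter> snd j)) I"
      unfolding pairwise_def
    proof (intro ballI impI)
      fix i j assume "i \<in> I" "j \<in> I" "i \<noteq> j"
      then have "interior (snd i) \<inter> interior (snd j) = {}"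
        using tagged_division_ofD(5)[OF p, of "fst i" "snd i" "fst j" "snd j"] \<open>I \<subseteq> p\<close> by auto
      then show "negligible (snd i \<inter> snd j)"
        using box \<open>i \<in> I\<close> \<open>j \<in> I\<close>
        by (metis convex_Int convex_box(1) interior_Int negligible_convex_interior)
    qed
  qed
  also have "\<dots> \<le> measure lebesgue T"
  proof (rule measure_mono_fmeasurable)
    show "\<Union>(snd ` I) \<subseteq> T" using sub by force
    show "\<Union>(snd ` I) \<in> sets lebesgue"
      using meas \<open>finite I\<close> by (intro sets.finite_UN) auto
  qed fact
  finally show ?thesis .
qed

lemma negligible_outer_open:
  fixes E :: "'a::euclidean_space set"
  assumes "negligible E" "d > 0"
  obtains T where "open T" "E \<subseteq> T" "T \<in> lmeasurable" "measure lebesgue T < d"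
proof -
  obtain T where T: "open T" "E \<subseteq> T" "T - E \<in> lmeasurable" "emeasure lebesgue (T - E) < ennreal d"
    using sets_lebesgue_outer_open[OF negligible_imp_sets[OF \<open>negligible E\<close>] \<open>d > 0\<close>] by blast
  have E: "E \<in> lmeasurable"
    using \<open>negligible E\<close> negligible_imp_measurable by blast
  have Tm: "T \<in> lmeasurable"
    using fmeasurable_Diff_D[OF T(3) E(1) T(2)] .
  then have "measure lebesgue (T - E) = measure lebesgue T"
    using \<open>negligible E\<close> by (simp add: measure_Diff_null_set negligible_iff_null_sets)
  moreover have "measure lebesgue (T - E) < d"
    using T(3,4) by (simp add: emeasure_eq_measure2 ennreal_less_iff)
  ultimately show ?thesis
    using that[OF T(1,2) Tm] by simp
qed

lemma has_vector_derivative_increment_bound: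
  fixes F :: "real \<Rightarrow> 'a::real_normed_vector"
  assumes "(F has_vector_derivative f) (at x within S)" "\<epsilon> > 0"
  obtains \<delta> where "\<delta> > 0"
    "\<And>u v. u \<in> S \<Longrightarrow> v \<in> S \<Longrightarrow> u \<le> x \<Longrightarrow> x \<le> v \<Longrightarrow> {u..v} \<subseteq> ball x \<delta> \<Longrightarrow>
      norm ((v - u) *\<^sub>R f - (F v - F u)) \<le> \<epsilon> * (v - u)"
proof -
  obtain \<delta> where "\<delta> > 0" and \<delta>: "\<And>y. y \<in> S \<Longrightarrow> norm (y - x) < \<delta> \<Longrightarrow>
      norm (F y - F x - (y - x) *\<^sub>R f) \<le> \<epsilon> * norm (y - x)"
    using assms unfolding has_vector_derivative_def has_derivative_within_alt by metis
  show thesis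
  proof (rule that[OF \<open>\<delta> > 0\<close>])
    fix u v assume "u \<in> S" "v \<in> S" "u \<le> x" "x \<le> v" and sub: "{u..v} \<subseteq> ball x \<delta>"
    then have "u \<in> {u..v}" "v \<in> {u..v}"
      by auto
    then have "u \<in> ball x \<delta>" "v \<in> ball x \<delta>"
      using sub by auto
    then have near: "norm (u - x) < \<delta>" "norm (v - x) < \<delta>"
      by (simp_all add: dist_norm norm_minus_commute)
    have "norm ((v - u) *\<^sub>R f - (F v - F u))
        = norm ((F u - F x - (u - x) *\<^sub>R f) - (F v - F x - (v - x) *\<^sub>R f))"
      by (simp add: algebra_simps)
    also have "\<dots> \<le> norm (F u - F x - (u - x) *\<^sub>R f) + norm (F v - F x - (v - x) *\<^sub>R f)"
      by (rule norm_triangle_ineq4)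
    also have "\<dots> \<le> \<epsilon> * norm (u - x) + \<epsilon> * norm (v - x)"
      using \<delta>[OF \<open>u \<in> S\<close> near(1)] \<delta>[OF \<open>v \<in> S\<close> near(2)] by (rule add_mono)
    also have "\<dots> = \<epsilon> * (v - u)"
      using \<open>u \<le> x\<close> \<open>x \<le> v\<close> by (simp add: algebra_simps)
    finally show "norm ((v - u) *\<^sub>R f - (F v - F u)) \<le> \<epsilon> * (v - u)" .
  qed
qed

lemma tagged_division_Riemann_sum_deviation:
  fixes F g :: "real \<Rightarrow> 'a::real_normed_vector"
  assumes "a \<le> b" and p: "p tagged_division_of {a..b}" and "I \<subseteq> p" and "\<epsilon> \<ge> 0"
    and vanish: "\<And>x K. (x, K) \<in> I \<Longrightarrow> g x = 0"
    and approx: "\<And>x K. (x, K) \<in> p - I \<Longrightarrow>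
      norm (measure lborel K *\<^sub>R g x - (F (Sup K) - F (Inf K))) \<le> \<epsilon> * measure lborel K"
  shows "norm ((\<Sum>(x, K)\<in>p. measure lborel K *\<^sub>R g x) - (F b - F a))
    \<le> \<epsilon> * (b - a) + (\<Sum>(x, K)\<in>I. norm (F (Sup K) - F (Inf K)))"
proof -
  let ?dev = "\<lambda>(x, K). norm (measure lborel K *\<^sub>R g x - (F (Sup K) - F (Inf K)))"
  have "finite p" using p by blast
  have "norm ((\<Sum>(x, K)\<in>p. measure lborel K *\<^sub>R g x) - (F b - F a))
      = norm (\<Sum>(x, K)\<in>p. measure lborel K *\<^sub>R g x - (F (Sup K) - F (Inf K)))"
    using additive_tagged_division_1[OF \<open>a \<le> b\<close> p, of F] by (simp add: split_def sum_subtractf)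
  also have "\<dots> \<le> sum ?dev p"
    by (rule sum_norm_le) (simp add: split_def)
  also have "\<dots> = sum ?dev (p - I) + sum ?dev I"
    using sum.subset_diff[OF \<open>I \<subseteq> p\<close> \<open>finite p\<close>] .
  also have "sum ?dev (p - I) \<le> (\<Sum>(x, K)\<in>p. \<epsilon> * measure lborel K)"
    using approx \<open>\<epsilon> \<ge> 0\<close> \<open>finite p\<close>
    by (intro order_trans[OF sum_mono sum_mono2]) (auto simp: split_def)
  also have "\<dots> = \<epsilon> * (b - a)"
    using additive_content_tagged_division[of p a b] p \<open>a \<le> b\<close>
    by (simp add: sum_distrib_left[symmetric] split_def)
  also have "sum ?dev I = (\<Sum>(x, K)\<in>I. norm (F (Sup K) - F (Inf K)))"
    using vanish by (intro sum.cong) (auto simp: norm_minus_commute)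
  finally show ?thesis by simp
qed

text \<open>The \<open>E\<close>-tagged intervals of a fine division lie in an open set of small measure
  around \<open>E\<close>, so absolute continuity makes their total variation small.\<close>

lemma abs_cont_on_variation_gauge:
  fixes F :: "real \<Rightarrow> 'a::real_normed_vector"
  assumes ac: "abs_cont_on a b F" and "negligible E" and "e > 0"
  obtains \<gamma> where "gauge \<gamma>"
    "\<And>p. p tagged_division_of {a..b} \<Longrightarrow> \<gamma> fine p \<Longrightarrow>
      (\<Sum>(x, K)\<in>{(x, K) \<in> p. x \<in> E}. norm (F (Sup K) - F (Inf K))) < e"
proof -
  obtain d where "d > 0" and var: "\<And>p I. p tagged_division_of {a..b} \<Longrightarrow> I \<subseteq> p \<Longrightarrow>
      (\<Sum>(x, K)\<in>I. measure lborel K) < d \<Longrightarrow> (\<Sum>(x, K)\<in>I. norm (F (Sup K) - F (Inf K))) < e"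
    using abs_cont_on_tagged_division_variation[OF ac \<open>e > 0\<close>] by auto
  obtain T where "open T" "E \<subseteq> T" "T \<in> lmeasurable" "measure lebesgue T < d"
    using negligible_outer_open[OF \<open>negligible E\<close> \<open>d > 0\<close>] by blast
  have "\<exists>\<rho>>0. x \<in> E \<longrightarrow> ball x \<rho> \<subseteq> T" for x
    using \<open>open T\<close> \<open>E \<subseteq> T\<close> open_contains_ball by (metis subsetD zero_less_one)
  then obtain r where r: "\<And>x. r x > 0" "\<And>x. x \<in> E \<Longrightarrow> ball x (r x) \<subseteq> T"
    by metis
  show thesis
  proof (rule that)
    show "gauge (\<lambda>x. ball x (r x))"
      using r(1) by (simp add: gauge_ball_dependent)
    fix p assume p: "p tagged_division_of {a..b}" and fine: "(\<lambda>x. ball x (r x)) fine p"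
    have "K \<subseteq> T" if "(x, K) \<in> {(x, K) \<in> p. x \<in> E}" for x K
      using that fine r(2) unfolding fine_def by blast
    then have "(\<Sum>(x, K)\<in>{(x, K) \<in> p. x \<in> E}. measure lborel K) \<le> measure lebesgue T"
      using \<open>T \<in> lmeasurable\<close> by (intro tagged_division_sum_measure_le[OF p]) auto
    then show "(\<Sum>(x, K)\<in>{(x, K) \<in> p. x \<in> E}. norm (F (Sup K) - F (Inf K))) < e"
      using \<open>measure lebesgue T < d\<close> by (intro var[OF p]) auto
  qed
qed

lemma has_vector_derivative_gauge:
  fixes F :: "real \<Rightarrow> 'a::real_normed_vector"
  assumes deriv: "\<And>x. x \<in> {a..b} - E \<Longrightarrow> (F has_vector_derivative f x) (at x within {a..b})"
    and "\<epsilon> > 0"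
  obtains \<gamma> where "gauge \<gamma>"
    "\<And>p x K. p tagged_division_of {a..b} \<Longrightarrow> \<gamma> fine p \<Longrightarrow> (x, K) \<in> p \<Longrightarrow> x \<notin> E \<Longrightarrow>
      norm (measure lborel K *\<^sub>R f x - (F (Sup K) - F (Inf K))) \<le> \<epsilon> * measure lborel K"
proof -
  have "\<exists>\<delta>>0. x \<in> {a..b} - E \<longrightarrow> (\<forall>u v. u \<in> {a..b} \<longrightarrow> v \<in> {a..b} \<longrightarrow> u \<le> x \<longrightarrow> x \<le> v \<longrightarrow>
      {u..v} \<subseteq> ball x \<delta> \<longrightarrow> norm ((v - u) *\<^sub>R f x - (F v - F u)) \<le> \<epsilon> * (v - u))" for x
  proof (cases "x \<in> {a..b} - E")
    case True
    show ?thesis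
      by (rule has_vector_derivative_increment_bound[OF deriv[OF True] \<open>\<epsilon> > 0\<close>]) blast
  qed (auto intro: exI[of _ 1])
  then obtain \<delta> where \<delta>: "\<And>x. \<delta> x > 0" "\<And>x u v. x \<in> {a..b} - E \<Longrightarrow> u \<in> {a..b} \<Longrightarrow> v \<in> {a..b} \<Longrightarrow>
      u \<le> x \<Longrightarrow> x \<le> v \<Longrightarrow> {u..v} \<subseteq> ball x (\<delta> x) \<Longrightarrow> norm ((v - u) *\<^sub>R f x - (F v - F u)) \<le> \<epsilon> * (v - u)"
    by metis
  show thesis
  proof (rule that)
    show "gauge (\<lambda>x. ball x (\<delta> x))"
      using \<delta>(1) by (simp add: gauge_ball_dependent)
    fix p x K assume p: "p tagged_division_of {a..b}" and fine: "(\<lambda>x. ball x (\<delta> x)) fine p"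
      and xK: "(x, K) \<in> p" and "x \<notin> E"
    obtain u v where K: "K = {u..v}" "x \<in> K" "K \<subseteq> {a..b}"
      using tagged_division_ofD(2,3,4)[OF p xK] by (metis box_real(2))
    moreover have "K \<subseteq> ball x (\<delta> x)"
      using fine xK by (auto simp: fine_def)
    ultimately show
      "norm (measure lborel K *\<^sub>R f x - (F (Sup K) - F (Inf K))) \<le> \<epsilon> * measure lborel K"
      using \<delta>(2)[of x u v] \<open>x \<notin> E\<close> by simp
  qed
qed

theorem fundamental_theorem_of_calculus_abs_cont_on:
  fixes F :: "real \<Rightarrow> 'a::real_normed_vector"
  assumes "a \<le> b" and ac: "abs_cont_on a b F" and "negligible E"
    and deriv: "\<And>x. x \<in> {a..b} - E \<Longrightarrow> (F has_vector_derivative f x) (at x within {a..b})"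
  shows "(f has_integral (F b - F a)) {a..b}"
proof -
  define g where "g x = (if x \<in> E then 0 else f x)" for x
  have "(g has_integral (F b - F a)) {a..b}"
    unfolding has_integral_real
  proof (intro allI impI)
    fix e :: real assume "e > 0"
    define \<epsilon> where "\<epsilon> = e / (2 * (b - a + 1))"
    have "e / 2 > 0" "\<epsilon> > 0" "\<epsilon> * (b - a) < e / 2"
      using \<open>e > 0\<close> \<open>a \<le> b\<close> by (simp_all add: \<epsilon>_def field_simps)
    obtain \<gamma>1 where "gauge \<gamma>1" and variation: "\<And>p. p tagged_division_of {a..b} \<Longrightarrow> \<gamma>1 fine p \<Longrightarrow>
        (\<Sum>(x, K)\<in>{(x, K) \<in> p. x \<in> E}. norm (F (Sup K) - F (Inf K))) < e / 2"
      using abs_cont_on_variation_gauge[OF ac \<open>negligible E\<close> \<open>e / 2 > 0\<close>] by blast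
    obtain \<gamma>2 where "gauge \<gamma>2" and approx: "\<And>p x K. p tagged_division_of {a..b} \<Longrightarrow> \<gamma>2 fine p \<Longrightarrow>
        (x, K) \<in> p \<Longrightarrow> x \<notin> E \<Longrightarrow>
        norm (measure lborel K *\<^sub>R f x - (F (Sup K) - F (Inf K))) \<le> \<epsilon> * measure lborel K"
      using has_vector_derivative_gauge[OF deriv \<open>\<epsilon> > 0\<close>] by blast
    show "\<exists>\<gamma>. gauge \<gamma> \<and> (\<forall>p. p tagged_division_of {a..b} \<and> \<gamma> fine p \<longrightarrow>
        norm ((\<Sum>(x, K)\<in>p. measure lborel K *\<^sub>R g x) - (F b - F a)) < e)"
    proof (intro exI conjI allI impI)
      show "gauge (\<lambda>x. \<gamma>1 x \<inter> \<gamma>2 x)"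
        using \<open>gauge \<gamma>1\<close> \<open>gauge \<gamma>2\<close> by (rule gauge_Int)
      fix p assume "p tagged_division_of {a..b} \<and> (\<lambda>x. \<gamma>1 x \<inter> \<gamma>2 x) fine p"
      then have p: "p tagged_division_of {a..b}" and "\<gamma>1 fine p" "\<gamma>2 fine p"
        by (auto simp: fine_Int)
      have "norm ((\<Sum>(x, K)\<in>p. measure lborel K *\<^sub>R g x) - (F b - F a))
          \<le> \<epsilon> * (b - a) + (\<Sum>(x, K)\<in>{(x, K) \<in> p. x \<in> E}. norm (F (Sup K) - F (Inf K)))"
        using approx[OF p \<open>\<gamma>2 fine p\<close>] \<open>\<epsilon> > 0\<close>
        by (intro tagged_division_Riemann_sum_deviation[OF \<open>a \<le> b\<close> p]) (auto simp: g_def)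
      then show "norm ((\<Sum>(x, K)\<in>p. measure lborel K *\<^sub>R g x) - (F b - F a)) < e"
        using variation[OF p \<open>\<gamma>1 fine p\<close>] \<open>\<epsilon> * (b - a) < e / 2\<close> by linarith
    qed
  qed
  then show ?thesis
    by (rule has_integral_spike[OF \<open>negligible E\<close>, rotated]) (simp add: g_def)
qed

lemma set_integrable_mult_continuous:
  fixes f c :: "'a::euclidean_space \<Rightarrow> real"
  assumes f: "set_integrable lborel S f" and "compact S" and c: "continuous_on S c"
  shows "set_integrable lborel S (\<lambda>x. f x * c x)"
proof -
  obtain K where K: "\<And>x. x \<in> S \<Longrightarrow> norm (c x) \<le> K"
    using compact_imp_bounded[OF compact_continuous_image[OF c \<open>compact S\<close>]]
    unfolding bounded_iff by blast
  show ?thesis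
  proof (rule set_integrable_bound)
    show "set_integrable lborel S (\<lambda>x. K * f x)"
      using f by (rule set_integrable_mult_right)
    show "AE x in lborel. x \<in> S \<longrightarrow> norm (f x * c x) \<le> norm (K * f x)"
    proof (rule AE_I2, rule impI)
      fix x assume "x \<in> S"
      then have "\<bar>c x\<bar> * \<bar>f x\<bar> \<le> \<bar>K\<bar> * \<bar>f x\<bar>"
        using K[of x] by (intro mult_right_mono) auto
      then show "norm (f x * c x) \<le> norm (K * f x)"
        by (simp add: abs_mult mult.commute)
    qed
    have "(\<lambda>x. indicator S x *\<^sub>R f x) \<in> borel_measurable lborel"
      using f unfolding set_integrable_def by (rule borel_measurable_integrable)
    moreover have "(\<lambda>x. indicator S x *\<^sub>R c x) \<in> borel_measurable lborel"
      using set_measurable_continuous_on[OF borel_closed[OF compact_imp_closed[OF \<open>compact S\<close>]] c]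
      unfolding set_borel_measurable_def by simp
    ultimately have "(\<lambda>x. (indicator S x *\<^sub>R f x) * (indicator S x *\<^sub>R c x)) \<in> borel_measurable lborel"
      by (rule borel_measurable_times)
    moreover have "(\<lambda>x. (indicator S x *\<^sub>R f x) * (indicator S x *\<^sub>R c x))
        = (\<lambda>x. indicator S x *\<^sub>R (f x * c x))"
      by (auto simp: fun_eq_iff split: split_indicator)
    ultimately show "set_borel_measurable lborel S (\<lambda>x. f x * c x)"
      unfolding set_borel_measurable_def by simp
  qed
qed

lemma set_integrable_neg_part:
  assumes "set_integrable M A q"
  shows "set_integrable M A (neg_part q)"
proof -
  have "neg_part q = (\<lambda>x. (1 / 2) * (\<bar>q x\<bar> - q x))"
    by (auto simp: neg_part_def fun_eq_iff min_def)
  then show ?thesis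
    using assms by (simp add: set_integrable_abs)
qed

lemma two_mult_le_weighted_squares:
  fixes s t c :: real
  assumes "c > 0"
  shows "2 * s * t \<le> c * s\<^sup>2 + t\<^sup>2 / c"
proof -
  have "c * s\<^sup>2 + t\<^sup>2 / c - 2 * s * t = (c * s - t)\<^sup>2 / c"
    using assms by (simp add: field_simps power2_eq_square)
  moreover have "(c * s - t)\<^sup>2 / c \<ge> 0"
    using assms by simp
  ultimately show ?thesis by linarith
qed

lemma square_le_of_forall_pos_le:
  fixes p A B :: real
  assumes "p \<ge> 0" "A \<ge> 0" "B \<ge> 0" and le: "\<And>c. c > 0 \<Longrightarrow> 2 * p \<le> c * A + B / c"
  shows "p\<^sup>2 \<le> A * B"
proof (cases "p = 0")
  case False
  then have "p > 0" using \<open>p \<ge> 0\<close> by simp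
  show ?thesis
  proof (cases "A = 0")
    case True
    have "2 * p \<le> B / ((B + 1) / p)"
      using le[of "(B + 1) / p"] \<open>p > 0\<close> \<open>B \<ge> 0\<close> True by simp
    also have "\<dots> \<le> p"
      using \<open>p > 0\<close> \<open>B \<ge> 0\<close> by (simp add: field_simps)
    finally show ?thesis
      using \<open>p > 0\<close> by simp
  next
    case False
    then have "A > 0" using \<open>A \<ge> 0\<close> by simp
    have "2 * p \<le> (p / A) * A + B / (p / A)"
      using le[of "p / A"] \<open>p > 0\<close> \<open>A > 0\<close> by simp
    also have "\<dots> = p + A * B / p"
      using \<open>A > 0\<close> by (simp add: field_simps)
    finally have "p * p \<le> A * B"
      using \<open>p > 0\<close> by (simp add: field_simps)
    then show ?thesis by (simp add: power2_eq_square)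
  qed
qed (use assms in simp)

lemma norm_diff_le_integral_norm_derivative:
  fixes g :: "real \<Rightarrow> 'a::banach"
  assumes "u \<le> v"
    and deriv: "\<And>t. t \<in> {u..v} \<Longrightarrow> (g has_vector_derivative g' t) (at t within {u..v})"
    and cont: "continuous_on {u..v} g'"
  shows "norm (g v - g u) \<le> integral {u..v} (\<lambda>t. norm (g' t))"
proof -
  have "integral {u..v} g' = g v - g u"
    using fundamental_theorem_of_calculus[OF \<open>u \<le> v\<close> deriv] by (rule integral_unique)
  moreover have "norm (integral {u..v} g') \<le> integral {u..v} (\<lambda>t. norm (g' t))"
    using cont
    by (intro Henstock_Kurzweil_Integration.integral_norm_bound_integral
        integrable_continuous_interval continuous_intros) auto
  ultimately show ?thesis by simp
qed

lemma two_norm_le_integral_norm_derivative: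
  fixes g :: "real \<Rightarrow> 'a::banach"
  assumes x: "x \<in> {a..b}"
    and deriv: "\<And>t. t \<in> {a..b} \<Longrightarrow> (g has_vector_derivative g' t) (at t within {a..b})"
    and cont: "continuous_on {a..b} g'" and "g a = 0" "g b = 0"
  shows "2 * norm (g x) \<le> integral {a..b} (\<lambda>t. norm (g' t))"
proof -
  have sub: "norm (g v - g u) \<le> integral {u..v} (\<lambda>t. norm (g' t))"
    if "a \<le> u" "u \<le> v" "v \<le> b" for u v
    using that
    by (intro norm_diff_le_integral_norm_derivative has_vector_derivative_within_subset[OF deriv]
        continuous_on_subset[OF cont]) auto
  have "2 * norm (g x) \<le> integral {a..x} (\<lambda>t. norm (g' t)) + integral {x..b} (\<lambda>t. norm (g' t))"
    using sub[of a x] sub[of x b] x \<open>g a = 0\<close> \<open>g b = 0\<close> by (simp add: norm_minus_commute)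
  also have "\<dots> = integral {a..b} (\<lambda>t. norm (g' t))"
    using x cont
    by (intro Henstock_Kurzweil_Integration.integral_combine
        integrable_continuous_interval continuous_intros) auto
  finally show ?thesis .
qed

locale dirichlet_function =
  fixes a b :: real and \<phi> \<phi>' :: "real \<Rightarrow> complex"
  assumes a_le_b: "a \<le> b"
    and deriv: "\<And>x. x \<in> {a..b} \<Longrightarrow> (\<phi> has_vector_derivative \<phi>' x) (at x within {a..b})"
    and continuous_deriv: "continuous_on {a..b} \<phi>'"
    and left: "\<phi> a = 0" and right: "\<phi> b = 0"
begin

lemma continuous: "continuous_on {a..b} \<phi>"
  using deriv by (intro continuous_on_vector_derivative) auto

lemma set_integrable_norm_sq: "set_integrable lborel {a..b} (\<lambda>t. (cmod (\<phi> t))\<^sup>2)"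
  unfolding set_integrable_def
  using continuous by (intro borel_integrable_compact compact_Icc continuous_intros)

lemma set_integrable_norm_sq_deriv: "set_integrable lborel {a..b} (\<lambda>t. (cmod (\<phi>' t))\<^sup>2)"
  unfolding set_integrable_def
  using continuous_deriv by (intro borel_integrable_compact compact_Icc continuous_intros)

lemma set_integrable_mult_norm_sq:
  "set_integrable lborel {a..b} f \<Longrightarrow> set_integrable lborel {a..b} (\<lambda>t. f t * (cmod (\<phi> t))\<^sup>2)"
  using continuous by (intro set_integrable_mult_continuous compact_Icc continuous_intros)

lemma integrable_norm_sq: "(\<lambda>t. (cmod (\<phi> t))\<^sup>2) integrable_on {a..b}"
  using set_integrable_norm_sq by (rule set_borel_integral_eq_integral(1))

lemma integrable_norm_sq_deriv: "(\<lambda>t. (cmod (\<phi>' t))\<^sup>2) integrable_on {a..b}"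
  using set_integrable_norm_sq_deriv by (rule set_borel_integral_eq_integral(1))

lemma agmon_inequality:
  assumes "x \<in> {a..b}"
  shows "(cmod (\<phi> x))\<^sup>2
    \<le> sqrt (integral {a..b} (\<lambda>t. (cmod (\<phi> t))\<^sup>2) * integral {a..b} (\<lambda>t. (cmod (\<phi>' t))\<^sup>2))"
    (is "_ \<le> sqrt (?N * ?D)")
proof (rule real_le_rsqrt, rule square_le_of_forall_pos_le)
  fix c :: real assume "c > 0"
  let ?g' = "\<lambda>t. \<phi> t * cnj (\<phi>' t) + \<phi>' t * cnj (\<phi> t)"
  have "2 * norm (\<phi> x * cnj (\<phi> x)) \<le> integral {a..b} (\<lambda>t. norm (?g' t))"
    using assms left right continuous continuous_deriv
    by (intro two_norm_le_integral_norm_derivative has_vector_derivative_mult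
        has_vector_derivative_cnj deriv continuous_intros) auto
  also have "\<dots> \<le> integral {a..b} (\<lambda>t. c * (cmod (\<phi> t))\<^sup>2 + (cmod (\<phi>' t))\<^sup>2 / c)"
  proof (rule integral_le)
    show "(\<lambda>t. norm (?g' t)) integrable_on {a..b}"
      using continuous continuous_deriv by (intro integrable_continuous_interval continuous_intros)
    show "(\<lambda>t. c * (cmod (\<phi> t))\<^sup>2 + (cmod (\<phi>' t))\<^sup>2 / c) integrable_on {a..b}"
      using integrable_norm_sq integrable_norm_sq_deriv
      by (intro integrable_add integrable_on_mult_right integrable_on_divide)
    fix t
    have "norm (?g' t) \<le> 2 * cmod (\<phi> t) * cmod (\<phi>' t)"
      using norm_triangle_ineq[of "\<phi> t * cnj (\<phi>' t)" "\<phi>' t * cnj (\<phi> t)"] by (simp add: norm_mult)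
    then show "norm (?g' t) \<le> c * (cmod (\<phi> t))\<^sup>2 + (cmod (\<phi>' t))\<^sup>2 / c"
      using two_mult_le_weighted_squares[OF \<open>c > 0\<close>, of "cmod (\<phi> t)" "cmod (\<phi>' t)"] by linarith
  qed
  also have "\<dots> = c * ?N + ?D / c"
    using integrable_norm_sq integrable_norm_sq_deriv
    by (subst Henstock_Kurzweil_Integration.integral_add)
      (auto intro: integrable_on_mult_right integrable_on_divide)
  finally show "2 * (cmod (\<phi> x))\<^sup>2 \<le> c * ?N + ?D / c"
    by (simp add: norm_mult power2_eq_square)
qed (use integrable_norm_sq integrable_norm_sq_deriv in \<open>auto intro: integral_nonneg\<close>)

lemma norm_sq_le_energy:
  assumes "x \<in> {a..b}"
  shows "(cmod (\<phi> x))\<^sup>2 \<le> (b - a) / 4 * integral {a..b} (\<lambda>t. (cmod (\<phi>' t))\<^sup>2)"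
    (is "_ \<le> _ * ?D")
proof -
  have "(cmod (\<phi> x))\<^sup>2 \<le> ((b - a) / 2) * (?D / 2)"
  proof (rule square_le_of_forall_pos_le)
    fix c :: real assume "c > 0"
    have "2 * cmod (\<phi> x) \<le> integral {a..b} (\<lambda>t. cmod (\<phi>' t))"
      using assms left right continuous_deriv
      by (intro two_norm_le_integral_norm_derivative deriv) auto
    also have "\<dots> \<le> integral {a..b} (\<lambda>t. c / 2 + (cmod (\<phi>' t))\<^sup>2 / (2 * c))"
    proof (rule integral_le)
      show "(\<lambda>t. cmod (\<phi>' t)) integrable_on {a..b}"
        using continuous_deriv by (intro integrable_continuous_interval continuous_intros)
      show "(\<lambda>t. c / 2 + (cmod (\<phi>' t))\<^sup>2 / (2 * c)) integrable_on {a..b}"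
        using integrable_norm_sq_deriv by (intro integrable_add integrable_on_divide) auto
      show "cmod (\<phi>' t) \<le> c / 2 + (cmod (\<phi>' t))\<^sup>2 / (2 * c)" for t
        using two_mult_le_weighted_squares[OF \<open>c > 0\<close>, of 1 "cmod (\<phi>' t)"]
        by (simp add: field_simps)
    qed
    also have "\<dots> = integral {a..b} (\<lambda>t. c / 2) + integral {a..b} (\<lambda>t. (cmod (\<phi>' t))\<^sup>2 / (2 * c))"
      using integrable_norm_sq_deriv
      by (intro Henstock_Kurzweil_Integration.integral_add integrable_on_divide) auto
    also have "\<dots> = c * ((b - a) / 2) + ?D / 2 / c"
      using a_le_b by simp
    finally show "2 * cmod (\<phi> x) \<le> c * ((b - a) / 2) + ?D / 2 / c" .
  qed (use a_le_b integrable_norm_sq_deriv in \<open>auto intro: integral_nonneg\<close>)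
  then show ?thesis by simp
qed

end

lemma (in dirichlet_function) zero_energy_bounds:
  assumes q: "set_integrable lborel {a..b} q"
    and normalized: "integral {a..b} (\<lambda>t. (cmod (\<phi> t))\<^sup>2) = 1"
    and zero_energy: "integral {a..b} (\<lambda>t. (cmod (\<phi>' t))\<^sup>2 + q t * (cmod (\<phi> t))\<^sup>2) = 0"
  shows "integral {a..b} (\<lambda>t. (cmod (\<phi>' t))\<^sup>2) \<le> (integral {a..b} (neg_part q))\<^sup>2"
    and "integral {a..b} (\<lambda>t. neg_part q t * (cmod (\<phi> t))\<^sup>2) \<le> (integral {a..b} (neg_part q))\<^sup>2"
proof -
  define D where "D = integral {a..b} (\<lambda>t. (cmod (\<phi>' t))\<^sup>2)"
  define P where "P = integral {a..b} (\<lambda>t. neg_part q t * (cmod (\<phi> t))\<^sup>2)"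
  define Q where "Q = integral {a..b} (neg_part q)"
  have int_q: "(\<lambda>t. q t * (cmod (\<phi> t))\<^sup>2) integrable_on {a..b}"
    using set_integrable_mult_norm_sq[OF q] by (rule set_borel_integral_eq_integral(1))
  have int_neg: "neg_part q integrable_on {a..b}"
    using set_integrable_neg_part[OF q] by (rule set_borel_integral_eq_integral(1))
  have int_neg_sq: "(\<lambda>t. neg_part q t * (cmod (\<phi> t))\<^sup>2) integrable_on {a..b}"
    using set_integrable_mult_norm_sq[OF set_integrable_neg_part[OF q]]
    by (rule set_borel_integral_eq_integral(1))
  have "D \<ge> 0" "Q \<ge> 0"
    unfolding D_def Q_def using integrable_norm_sq_deriv int_neg
    by (auto intro!: integral_nonneg simp: neg_part_def)
  have "D = - integral {a..b} (\<lambda>t. q t * (cmod (\<phi> t))\<^sup>2)"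
    using zero_energy integrable_norm_sq_deriv int_q
    by (simp add: D_def Henstock_Kurzweil_Integration.integral_add)
  also have "\<dots> \<le> P"
    unfolding P_def integral_neg[symmetric]
    by (rule integral_le[OF integrable_neg[OF int_q] int_neg_sq]) (auto simp: neg_part_def min_def)
  finally have "D \<le> P" .
  have "P \<le> integral {a..b} (\<lambda>t. neg_part q t * sqrt D)"
    unfolding P_def
  proof (rule integral_le)
    fix t assume "t \<in> {a..b}"
    then show "neg_part q t * (cmod (\<phi> t))\<^sup>2 \<le> neg_part q t * sqrt D"
      using agmon_inequality[of t] normalized
      by (intro mult_left_mono) (auto simp: D_def neg_part_def)
  qed (use int_neg_sq int_neg in \<open>auto intro: integrable_on_mult_left\<close>)
  also have "\<dots> = Q * sqrt D"
    by (simp add: Q_def)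
  finally have "P \<le> Q * sqrt D" .
  have "sqrt D \<le> Q"
  proof (cases "D = 0")
    case False
    then have "sqrt D * sqrt D \<le> Q * sqrt D"
      using \<open>D \<ge> 0\<close> \<open>D \<le> P\<close> \<open>P \<le> Q * sqrt D\<close> by simp
    moreover have "sqrt D > 0"
      using False \<open>D \<ge> 0\<close> by simp
    ultimately show ?thesis
      by (rule mult_right_le_imp_le)
  qed (use \<open>Q \<ge> 0\<close> in simp)
  then have "D \<le> Q\<^sup>2"
    using \<open>D \<ge> 0\<close> power_mono[of "sqrt D" Q 2] by simp
  moreover have "P \<le> Q\<^sup>2"
    using \<open>P \<le> Q * sqrt D\<close> \<open>sqrt D \<le> Q\<close> \<open>Q \<ge> 0\<close> mult_left_mono[of "sqrt D" Q Q]
    by (simp add: power2_eq_square)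
  ultimately show "D \<le> Q\<^sup>2" "P \<le> Q\<^sup>2" .
qed

lemma eigenfunction_energy_identity:
  fixes q w :: "real \<Rightarrow> real" and lam :: complex and \<phi> \<phi>' :: "real \<Rightarrow> complex"
  assumes "a \<le> b"
    and deriv: "\<And>x. x \<in> {a..b} \<Longrightarrow> (\<phi> has_vector_derivative \<phi>' x) (at x within {a..b})"
    and ac: "abs_cont_on a b \<phi>" "abs_cont_on a b \<phi>'"
    and ode: "AE x in lborel. x \<in> {a..b} \<longrightarrow>
      (\<exists>y2. (\<phi>' has_vector_derivative y2) (at x within {a..b}) \<and>
        - y2 + of_real (q x) * \<phi> x = lam * of_real (w x) * \<phi> x)"
    and bc: "\<phi> a = 0" "\<phi> b = 0"
  shows "((\<lambda>x. of_real ((cmod (\<phi>' x))\<^sup>2 + q x * (cmod (\<phi> x))\<^sup>2)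
      - lam * of_real (w x * (cmod (\<phi> x))\<^sup>2)) has_integral 0) {a..b}"
    (is "(?h has_integral 0) _")
proof -
  obtain N where "negligible N" and N: "\<And>x. x \<in> {a..b} - N \<Longrightarrow>
      \<exists>y2. (\<phi>' has_vector_derivative y2) (at x within {a..b}) \<and>
        - y2 + of_real (q x) * \<phi> x = lam * of_real (w x) * \<phi> x"
    using AE_completion[OF ode] unfolding eventually_ae_filter_negligible by blast
  have "((\<lambda>x. \<phi>' x * cnj (\<phi> x)) has_vector_derivative ?h x) (at x within {a..b})"
    if x: "x \<in> {a..b} - N" for x
  proof -
    obtain y2 where y2: "(\<phi>' has_vector_derivative y2) (at x within {a..b})"
        and equation: "- y2 + of_real (q x) * \<phi> x = lam * of_real (w x) * \<phi> x"
      using N[OF x] by blast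
    have "y2 = of_real (q x) * \<phi> x - (- y2 + of_real (q x) * \<phi> x)"
      by simp
    also have "\<dots> = of_real (q x) * \<phi> x - lam * of_real (w x) * \<phi> x"
      by (simp only: equation)
    finally have y2_eq: "y2 = of_real (q x) * \<phi> x - lam * of_real (w x) * \<phi> x" .
    have "((\<lambda>x. \<phi>' x * cnj (\<phi> x)) has_vector_derivative \<phi>' x * cnj (\<phi>' x) + y2 * cnj (\<phi> x))
        (at x within {a..b})"
      using x by (intro has_vector_derivative_mult y2 has_vector_derivative_cnj deriv) auto
    moreover have "?h x = \<phi>' x * cnj (\<phi>' x) + of_real (q x) * (\<phi> x * cnj (\<phi> x))
        - lam * (of_real (w x) * (\<phi> x * cnj (\<phi> x)))"
      by (simp only: of_real_add of_real_mult complex_norm_square)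
    moreover have "\<dots> = \<phi>' x * cnj (\<phi>' x) + y2 * cnj (\<phi> x)"
      by (simp add: y2_eq algebra_simps)
    ultimately show ?thesis by simp
  qed
  then have "(?h has_integral (\<phi>' b * cnj (\<phi> b) - \<phi>' a * cnj (\<phi> a))) {a..b}"
    using ac by (intro fundamental_theorem_of_calculus_abs_cont_on[OF \<open>a \<le> b\<close> _ \<open>negligible N\<close>]
        abs_cont_on_mult abs_cont_on_cnj)
  then show ?thesis
    using bc by simp
qed

lemma has_integral_zero_nonreal_combination:
  fixes A B :: "'n::euclidean_space \<Rightarrow> real" and lam :: complex
  assumes "((\<lambda>x. of_real (A x) - lam * of_real (B x)) has_integral 0) S"
    and A: "A integrable_on S" and B: "B integrable_on S" and "lam \<notin> \<real>"
  shows "integral S A = 0 \<and> integral S B = 0"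
proof -
  have "((\<lambda>x. of_real (A x) - lam * of_real (B x)) has_integral
      (of_real (integral S A) - lam * of_real (integral S B))) S"
    using has_integral_diff[OF has_integral_linear[OF integrable_integral[OF A] bounded_linear_of_real]
        has_integral_mult_right[where c = lam,
          OF has_integral_linear[OF integrable_integral[OF B] bounded_linear_of_real]]]
    by (simp add: o_def)
  then have combination: "of_real (integral S A) - lam * of_real (integral S B) = 0"
    using assms(1) has_integral_unique by blast
  have "Im lam \<noteq> 0"
    using \<open>lam \<notin> \<real>\<close> complex_is_Real_iff by blast
  moreover have "Im lam * integral S B = 0"
    using arg_cong[OF combination, of Im] by simp
  ultimately have "integral S B = 0" by simp
  with combination show ?thesis by simp
qed

lemma (in dirichlet_function) nonreal_eigenvalue_integrals_vanish:
  fixes q w :: "real \<Rightarrow> real" and lam :: complex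
  assumes q: "set_integrable lborel {a..b} q" and w: "set_integrable lborel {a..b} w"
    and ac: "abs_cont_on a b \<phi>" "abs_cont_on a b \<phi>'"
    and ode: "AE x in lborel. x \<in> {a..b} \<longrightarrow>
      (\<exists>y2. (\<phi>' has_vector_derivative y2) (at x within {a..b}) \<and>
        - y2 + of_real (q x) * \<phi> x = lam * of_real (w x) * \<phi> x)"
    and "lam \<notin> \<real>"
  shows "set_integrable lborel {a..b} (\<lambda>x. (cmod (\<phi>' x))\<^sup>2 + q x * (cmod (\<phi> x))\<^sup>2)"
    and "integral {a..b} (\<lambda>x. (cmod (\<phi>' x))\<^sup>2 + q x * (cmod (\<phi> x))\<^sup>2) = 0"
    and "integral {a..b} (\<lambda>x. w x * (cmod (\<phi> x))\<^sup>2) = 0"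
proof -
  have energy: "set_integrable lborel {a..b} (\<lambda>x. (cmod (\<phi>' x))\<^sup>2 + q x * (cmod (\<phi> x))\<^sup>2)"
    using set_integrable_norm_sq_deriv set_integrable_mult_norm_sq[OF q]
    by (rule set_integral_add(1))
  have "integral {a..b} (\<lambda>x. (cmod (\<phi>' x))\<^sup>2 + q x * (cmod (\<phi> x))\<^sup>2) = 0
      \<and> integral {a..b} (\<lambda>x. w x * (cmod (\<phi> x))\<^sup>2) = 0"
    using eigenfunction_energy_identity[OF a_le_b deriv ac ode left right] \<open>lam \<notin> \<real>\<close>
      set_borel_integral_eq_integral(1)[OF energy]
      set_borel_integral_eq_integral(1)[OF set_integrable_mult_norm_sq[OF w]]
    by (intro has_integral_zero_nonreal_combination) auto
  with energy show "set_integrable lborel {a..b} (\<lambda>x. (cmod (\<phi>' x))\<^sup>2 + q x * (cmod (\<phi> x))\<^sup>2)"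
    and "integral {a..b} (\<lambda>x. (cmod (\<phi>' x))\<^sup>2 + q x * (cmod (\<phi> x))\<^sup>2) = 0"
    and "integral {a..b} (\<lambda>x. w x * (cmod (\<phi> x))\<^sup>2) = 0"
    by auto
qed

theorem mainTheorem6:
  fixes q w :: "real \<Rightarrow> real" and lam :: complex and \<phi> \<phi>' :: "real \<Rightarrow> complex"
  assumes q_L1: "set_integrable lborel {-1..1} q"
    and w_L1: "set_integrable lborel {-1..1} w"
    and w_ne: "AE x in lborel. x \<in> {-1..1} \<longrightarrow> w x \<noteq> 0"
    and nonreal: "lam \<notin> \<real>"
    and deriv: "\<forall>x\<in>{-1..1}. (\<phi> has_vector_derivative \<phi>' x) (at x within {-1..1})"
    and ac: "abs_cont_on (-1) 1 \<phi>" "abs_cont_on (-1) 1 \<phi>'"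
    and ode: "AE x in lborel. x \<in> {-1..1} \<longrightarrow>
               (\<exists>y2. (\<phi>' has_vector_derivative y2) (at x within {-1..1}) \<and>
                     - y2 + of_real (q x) * \<phi> x = lam * of_real (w x) * \<phi> x)"
    and bc: "\<phi> (-1) = 0" "\<phi> 1 = 0"
    and norm1: "(LBINT x=-1..1. (cmod (\<phi> x))\<^sup>2) = 1"
  shows "set_integrable lborel {-1..1} (\<lambda>x. w x * (cmod (\<phi> x))\<^sup>2)
       \<and> (LBINT x=-1..1. w x * (cmod (\<phi> x))\<^sup>2) = 0
       \<and> set_integrable lborel {-1..1} (\<lambda>x. (cmod (\<phi>' x))\<^sup>2 + q x * (cmod (\<phi> x))\<^sup>2)
       \<and> (LBINT x=-1..1. (cmod (\<phi>' x))\<^sup>2 + q x * (cmod (\<phi> x))\<^sup>2) = 0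
       \<and> set_integrable lborel {-1..1} (\<lambda>x. (cmod (\<phi>' x))\<^sup>2)
       \<and> (LBINT x=-1..1. (cmod (\<phi>' x))\<^sup>2) \<le> 4 * (LBINT x=-1..1. neg_part q x)\<^sup>2
       \<and> set_integrable lborel {-1..1} (\<lambda>x. neg_part q x * (cmod (\<phi> x))\<^sup>2)
       \<and> (LBINT x=-1..1. neg_part q x * (cmod (\<phi> x))\<^sup>2) \<le> 4 * (LBINT x=-1..1. neg_part q x)\<^sup>2
       \<and> (\<forall>x\<in>{-1..1}. (cmod (\<phi> x))\<^sup>2 \<le> (LBINT t=-1..1. (cmod (\<phi>' t))\<^sup>2))"
proof -
  have "continuous_on {-1..1} \<phi>'"
    using ac(2) by (rule abs_cont_on_imp_continuous_on)
  then interpret dirichlet_function "-1" 1 \<phi> \<phi>'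
    using deriv bc by unfold_locales auto
  have LBINT: "(LBINT x=-1..1. f x) = integral {-1..1} f"
    if "set_integrable lborel {-1..1} f" for f :: "real \<Rightarrow> real"
    using interval_integral_eq_integral[of "-1" 1 f] that by (simp add: one_ereal_def)
  note vanish = nonreal_eigenvalue_integrals_vanish[OF q_L1 w_L1 ac ode nonreal]
  have normalized: "integral {-1..1} (\<lambda>x. (cmod (\<phi> x))\<^sup>2) = 1"
    using norm1 LBINT[OF set_integrable_norm_sq] by simp
  have bounds:
      "integral {-1..1} (\<lambda>x. (cmod (\<phi>' x))\<^sup>2) \<le> 4 * (integral {-1..1} (neg_part q))\<^sup>2"
      "integral {-1..1} (\<lambda>x. neg_part q x * (cmod (\<phi> x))\<^sup>2) \<le> 4 * (integral {-1..1} (neg_part q))\<^sup>2"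
    using zero_energy_bounds[OF q_L1 normalized vanish(2)]
      zero_le_power2[of "integral {-1..1} (neg_part q)"]
    by linarith+
  have "(cmod (\<phi> x))\<^sup>2 \<le> integral {-1..1} (\<lambda>t. (cmod (\<phi>' t))\<^sup>2)" if "x \<in> {-1..1}" for x
    using norm_sq_le_energy[OF that] integral_nonneg[OF integrable_norm_sq_deriv] by simp
  then show ?thesis
    using vanish bounds set_integrable_mult_norm_sq[OF w_L1] set_integrable_norm_sq_deriv
      set_integrable_mult_norm_sq[OF set_integrable_neg_part[OF q_L1]]
    by (simp add: LBINT set_integrable_neg_part[OF q_L1])
qed

end
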